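(* Let $L\ge1$ be an integer and $h(x)=\mathrm{sech}\big((2L+1)\,\mathrm{arcsech}(x)\big)$. For $\epsilon\ll1$ (i.e. as $\epsilon\to0^+$), the larger solution $x_2\in(0,1)$ of the equation $h(x)+\epsilon=x$ satisfies $$x_2=1-\frac{1}{4(L^2+L)}\epsilon+\mathcal{O}(\epsilon^2).$$ *)

theory Defs
  imports Complex_Main "HOL-Library.Landau_Symbols"
begin

definition sech :: "real \<Rightarrow> real" where
  "sech y = 1 / cosh y"

definition arcsech :: "real \<Rightarrow> real" where
  "arcsech x = ln ((1 + sqrt (1 - x\<^sup>2)) / x)"

definition hfun :: "nat \<Rightarrow> real \<Rightarrow> real" where
  "hfun L x = sech ((2 * real L + 1) * arcsech x)"

definition sols :: "nat \<Rightarrow> real \<Rightarrow> real set" where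
  "sols L eps = {x. 0 < x \<and> x < 1 \<and> hfun L x + eps = x}"

end

theory Submission
  imports Defs "HOL-Real_Asymp.Real_Asymp"
begin

text \<open>Put \<open>n = 2L + 1\<close>. The substitution \<open>x = sech t\<close>, \<open>t > 0\<close>, turns \<open>h(x) + \<epsilon> = x\<close> into
  \<open>sech t - sech (n t) = \<epsilon>\<close>. The left-hand side vanishes at \<open>0\<close> and at infinity; it is increasing
  near \<open>0\<close>, decreasing near infinity and bounded away from \<open>0\<close> in between, so for small \<open>\<epsilon>\<close> it
  takes the value \<open>\<epsilon>\<close> exactly twice, and the larger solution is \<open>x\<^sub>2 = sech t\<^sub>1\<close> for the
  smaller root \<open>t\<^sub>1\<close>. Since \<open>sech t - sech (n t) = (n\<^sup>2 - 1) t\<^sup>2 / 2 + O(t\<^sup>4)\<close> and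
  \<open>1 - sech t = t\<^sup>2 / 2 + O(t\<^sup>4)\<close>, we get \<open>(n\<^sup>2 - 1)(1 - x\<^sub>2) = \<epsilon> + O(t\<^sub>1\<^sup>4)\<close>, and
  \<open>t\<^sub>1\<^sup>4 = O(\<epsilon>\<^sup>2)\<close> because the left-hand side is bounded below by a multiple of \<open>t\<^sup>2\<close> near \<open>0\<close>.\<close>

lemma sech_strict_decreasing:
  assumes "0 \<le> s" "s < t"
  shows "sech t < sech s"
proof -
  have "cosh s < cosh t"
    using assms by (subst cosh_real_nonneg_less_iff) auto
  then show ?thesis
    unfolding sech_def by (simp add: frac_less2)
qed

lemma sech_pos_lt_1:
  assumes "0 < t"
  shows "0 < sech t" "sech t < 1"
  using sech_strict_decreasing[of 0 t] assms by (auto simp: sech_def)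

lemma sech_surj_unit_interval:
  assumes "0 < x" "x < 1"
  obtains t where "0 < t" "sech t = x"
proof
  have "1 < 1 / x"
    using assms by simp
  then show "0 < arcosh (1 / x)" "sech (arcosh (1 / x)) = x"
    by (auto simp: sech_def)
qed

lemma arcsech_sech:
  assumes "0 \<le> t"
  shows "arcsech (sech t) = t"
proof -
  have "cosh t \<noteq> 0"
    by (metis cosh_real_pos less_irrefl)
  then have "1 - (sech t)\<^sup>2 = ((cosh t)\<^sup>2 - 1) / (cosh t)\<^sup>2"
    by (simp add: sech_def field_simps)
  also have "\<dots> = (sinh t / cosh t)\<^sup>2"
    by (simp add: cosh_square_eq power_divide)
  finally have "1 - (sech t)\<^sup>2 = (sinh t / cosh t)\<^sup>2" .
  then have "sqrt (1 - (sech t)\<^sup>2) = sinh t / cosh t"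
    using assms by simp
  then have "(1 + sqrt (1 - (sech t)\<^sup>2)) / sech t = cosh t + sinh t"
    by (simp add: sech_def field_simps)
  then show ?thesis
    unfolding arcsech_def by (simp add: cosh_plus_sinh)
qed

definition sech_gap :: "real \<Rightarrow> real \<Rightarrow> real" where
  "sech_gap n t = sech t - sech (n * t)"

lemma sols_eq_sech_image:
  "sols L eps = sech ` {t. 0 < t \<and> sech_gap (2 * real L + 1) t = eps}"
proof -
  have hfun_sech: "hfun L (sech t) = sech ((2 * real L + 1) * t)" if "0 < t" for t
    using that by (simp add: hfun_def arcsech_sech)
  show ?thesis
  proof (intro equalityI subsetI)
    fix x assume "x \<in> sols L eps"
    then have x: "0 < x" "x < 1" "hfun L x + eps = x"
      by (auto simp: sols_def)
    then obtain t where "0 < t" "sech t = x"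
      using sech_surj_unit_interval by blast
    with x hfun_sech show "x \<in> sech ` {t. 0 < t \<and> sech_gap (2 * real L + 1) t = eps}"
      by (auto simp: sech_gap_def)
  next
    fix x assume "x \<in> sech ` {t. 0 < t \<and> sech_gap (2 * real L + 1) t = eps}"
    then show "x \<in> sols L eps"
      using sech_pos_lt_1 hfun_sech by (auto simp: sols_def sech_gap_def)
  qed
qed

definition sech_gap_deriv :: "real \<Rightarrow> real \<Rightarrow> real" where
  "sech_gap_deriv n t = n * sinh (n * t) / (cosh (n * t))\<^sup>2 - sinh t / (cosh t)\<^sup>2"

lemma sech_gap_has_real_derivative: "(sech_gap n has_real_derivative sech_gap_deriv n t) (at t)"
  unfolding sech_gap_def sech_def sech_gap_deriv_def
  by (rule derivative_eq_intros refl | simp)+ (simp add: power2_eq_square)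

lemma continuous_on_sech_gap: "continuous_on S (sech_gap n)"
  unfolding sech_gap_def sech_def by (intro continuous_intros) simp_all

lemma sech_gap_0 [simp]: "sech_gap n 0 = 0"
  by (simp add: sech_gap_def)

lemma sech_gap_pos:
  assumes "1 < n" "0 < t"
  shows "0 < sech_gap n t"
  using sech_strict_decreasing[of t "n * t"] assms by (simp add: sech_gap_def)

lemma sech_gap_tendsto_0_at_top:
  assumes "1 < n"
  shows "(sech_gap n \<longlongrightarrow> 0) at_top"
  using assms unfolding sech_gap_def sech_def by real_asymp

lemma sech_gap_taylor:
  assumes "1 < n"
  shows "(\<lambda>t. (n * n - 1) * (1 - sech t) - sech_gap n t) \<in> O[at_right 0](\<lambda>t. t ^ 4)"
  using assms unfolding sech_gap_def sech_def by real_asymp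

lemma sech_gap_eventually_quadratic_lower_bound:
  assumes "1 < n"
  shows "\<forall>\<^sub>F t in at_right 0. t\<^sup>2 < 4 / (n * n - 1) * sech_gap n t"
proof -
  have "((\<lambda>t. sech_gap n t / t\<^sup>2) \<longlongrightarrow> (n * n - 1) / 2) (at_right 0)"
    using assms unfolding sech_gap_def sech_def by real_asymp
  moreover have "0 < n * n - 1"
    using assms by (simp add: less_1_mult)
  ultimately have "\<forall>\<^sub>F t in at_right 0. (n * n - 1) / 4 < sech_gap n t / t\<^sup>2"
    by (intro order_tendstoD(1)) auto
  then show ?thesis
    using eventually_at_right_less[of 0]
    by eventually_elim (use \<open>0 < n * n - 1\<close> in \<open>simp add: field_simps\<close>)
qed

lemma sech_gap_deriv_eventually_pos:
  assumes "1 < n"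
  shows "\<forall>\<^sub>F t in at_right 0. 0 < sech_gap_deriv n t"
proof -
  have "((\<lambda>t. sech_gap_deriv n t / t) \<longlongrightarrow> n * n - 1) (at_right 0)"
    using assms unfolding sech_gap_deriv_def by real_asymp
  moreover have "0 < n * n - 1"
    using assms by (simp add: less_1_mult)
  ultimately have "\<forall>\<^sub>F t in at_right 0. 0 < sech_gap_deriv n t / t"
    by (intro order_tendstoD(1)) auto
  then show ?thesis
    using eventually_at_right_less[of 0]
    by eventually_elim (simp add: zero_less_divide_iff)
qed

lemma sech_gap_deriv_eventually_neg:
  assumes "1 < n"
  shows "\<forall>\<^sub>F t in at_top. sech_gap_deriv n t < 0"
  using assms unfolding sech_gap_deriv_def by real_asymp

lemma level_set_eq_two_points:
  fixes f :: "real \<Rightarrow> real"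
  assumes cont: "continuous_on {0..} f" and f0: "f 0 = 0" and lim: "(f \<longlongrightarrow> 0) at_top"
    and "0 < a" "a < B"
    and inc: "strict_mono_on {0..a} f" and dec: "strict_antimono_on {B..} f"
    and lower: "\<And>t. a \<le> t \<Longrightarrow> t \<le> B \<Longrightarrow> m \<le> f t"
    and eps: "0 < eps" "eps < m"
  obtains t1 t2 where "0 < t1" "t1 < a" "B < t2" "{t. 0 < t \<and> f t = eps} = {t1, t2}"
proof -
  have cont_interval: "continuous_on {x..y} f" if "0 \<le> x" for x y
    using continuous_on_subset[OF cont] that by auto
  have fa: "eps < f a" and fB: "eps < f B"
    using lower[of a] lower[of B] eps \<open>a < B\<close> by auto
  obtain t1 where t1: "0 \<le> t1" "t1 \<le> a" "f t1 = eps"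
    using IVT'[of f 0 eps a] f0 eps fa \<open>0 < a\<close> cont_interval[of 0 a] by auto
  moreover have "t1 \<noteq> 0" "t1 \<noteq> a"
    using t1 f0 eps fa by auto
  ultimately have t1_bounds: "0 < t1" "t1 < a"
    by auto
  have "\<forall>\<^sub>F t in at_top. B \<le> t \<and> f t < eps"
    using eventually_ge_at_top order_tendstoD(2)[OF lim eps(1)] by (rule eventually_conj)
  then obtain C where "B \<le> C" "f C < eps"
    by (auto simp: eventually_at_top_linorder)
  then obtain t2 where t2: "B \<le> t2" "f t2 = eps"
    using IVT2'[of f C eps B] fB \<open>0 < a\<close> \<open>a < B\<close> cont_interval[of B C] by auto
  with fB have t2_bound: "B < t2"
    by (cases "t2 = B") auto
  have inj_inc: "inj_on f {0..a}"
    using inc by (rule strict_mono_on_imp_inj_on)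
  have inj_dec: "inj_on f {B..}"
    using dec strict_antimono_iff_antimono by blast
  have "t = t1 \<or> t = t2" if "0 < t" "f t = eps" for t
  proof -
    consider "t \<le> a" | "a < t" "t < B" | "B \<le> t"
      by linarith
    then show ?thesis
    proof cases
      case 1
      then show ?thesis
        using inj_onD[OF inj_inc, of t t1] that t1 by auto
    next
      case 2
      then show ?thesis
        using lower[of t] that eps by auto
    next
      case 3
      then show ?thesis
        using inj_onD[OF inj_dec, of t t2] that t2 by auto
    qed
  qed
  then have "{t. 0 < t \<and> f t = eps} = {t1, t2}"
    using t1 t1_bounds t2 t2_bound \<open>0 < a\<close> \<open>a < B\<close> by auto
  with t1_bounds t2_bound show ?thesis
    using that by blast
qed

lemma strict_mono_on_if_deriv_pos:
  fixes f f' :: "real \<Rightarrow> real"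
  assumes deriv: "\<And>t. (f has_real_derivative f' t) (at t)" and pos: "\<And>t. a < t \<Longrightarrow> t < b \<Longrightarrow> 0 < f' t"
  shows "strict_mono_on {a..b} f"
proof (rule strict_mono_onI)
  fix s t assume "s \<in> {a..b}" "t \<in> {a..b}" "s < t"
  have "continuous_on {s..t} f"
    using deriv by (blast intro: continuous_at_imp_continuous_on DERIV_isCont)
  moreover have "0 < f' x" if "s < x" "x < t" for x
    using pos that \<open>s \<in> {a..b}\<close> \<open>t \<in> {a..b}\<close> by auto
  ultimately show "f s < f t"
    using \<open>s < t\<close> deriv by (blast intro: DERIV_pos_imp_increasing_open)
qed

lemma strict_antimono_on_if_deriv_neg:
  fixes f f' :: "real \<Rightarrow> real"
  assumes deriv: "\<And>t. (f has_real_derivative f' t) (at t)" and neg: "\<And>t. B < t \<Longrightarrow> f' t < 0"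
  shows "strict_antimono_on {B..} f"
proof (rule monotone_onI)
  fix s t assume "s \<in> {B..}" "t \<in> {B..}" "s < t"
  have "continuous_on {s..t} f"
    using deriv by (blast intro: continuous_at_imp_continuous_on DERIV_isCont)
  moreover have "f' x < 0" if "s < x" for x
    using neg that \<open>s \<in> {B..}\<close> by auto
  ultimately show "f t < f s"
    using \<open>s < t\<close> deriv by (blast intro: DERIV_neg_imp_decreasing_open)
qed

lemma sech_gap_unimodal:
  assumes "1 < n"
  obtains a B m where "0 < a" "a < B" "0 < m"
    "strict_mono_on {0..a} (sech_gap n)" "strict_antimono_on {B..} (sech_gap n)"
    "\<And>t. a \<le> t \<Longrightarrow> t \<le> B \<Longrightarrow> m \<le> sech_gap n t"
    "\<And>t. 0 < t \<Longrightarrow> t \<le> a \<Longrightarrow> t\<^sup>2 < 4 / (n * n - 1) * sech_gap n t"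
proof -
  have "\<forall>\<^sub>F t in at_right 0. 0 < sech_gap_deriv n t \<and> t\<^sup>2 < 4 / (n * n - 1) * sech_gap n t"
    using sech_gap_deriv_eventually_pos[OF assms] sech_gap_eventually_quadratic_lower_bound[OF assms]
    by (rule eventually_conj)
  then obtain b where "0 < b"
    and near_0: "\<And>t. 0 < t \<Longrightarrow> t < b \<Longrightarrow> 0 < sech_gap_deriv n t \<and> t\<^sup>2 < 4 / (n * n - 1) * sech_gap n t"
    unfolding eventually_at_right_field by auto
  obtain N where near_top: "\<And>t. N \<le> t \<Longrightarrow> sech_gap_deriv n t < 0"
    using sech_gap_deriv_eventually_neg[OF assms] unfolding eventually_at_top_linorder by blast
  define a where "a = b / 2"
  define B where "B = max N (a + 1)"
  have "0 < a" "a < b" "a < B"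
    using \<open>0 < b\<close> by (simp_all add: a_def B_def less_max_iff_disj)
  have "strict_mono_on {0..a} (sech_gap n)"
    using near_0 \<open>a < b\<close> by (intro strict_mono_on_if_deriv_pos[OF sech_gap_has_real_derivative]) auto
  moreover have "strict_antimono_on {B..} (sech_gap n)"
    using near_top by (intro strict_antimono_on_if_deriv_neg[OF sech_gap_has_real_derivative]) (auto simp: B_def)
  moreover obtain t0 where "t0 \<in> {a..B}" and "\<And>t. t \<in> {a..B} \<Longrightarrow> sech_gap n t0 \<le> sech_gap n t"
    using continuous_attains_inf[of "{a..B}" "sech_gap n"] \<open>a < B\<close> continuous_on_sech_gap by auto
  moreover have "0 < sech_gap n t0"
    using sech_gap_pos[OF assms] \<open>t0 \<in> {a..B}\<close> \<open>0 < a\<close> by simp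
  moreover have "t\<^sup>2 < 4 / (n * n - 1) * sech_gap n t" if "0 < t" "t \<le> a" for t
    using near_0[of t] that \<open>a < b\<close> by auto
  ultimately show ?thesis
    using that[of a B "sech_gap n t0"] \<open>0 < a\<close> \<open>a < B\<close> by auto
qed

lemma sech_gap_eventually_two_roots:
  assumes "1 < n"
  shows "\<forall>\<^sub>F eps in at_right 0. \<exists>t1 t2. 0 < t1 \<and> t1 < t2 \<and> t1\<^sup>2 < 4 / (n * n - 1) * eps
           \<and> {t. 0 < t \<and> sech_gap n t = eps} = {t1, t2}"
proof -
  obtain a B m where "0 < a" "a < B" "0 < m"
    and shape: "strict_mono_on {0..a} (sech_gap n)" "strict_antimono_on {B..} (sech_gap n)"
      "\<And>t. a \<le> t \<Longrightarrow> t \<le> B \<Longrightarrow> m \<le> sech_gap n t"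
    and quadratic: "\<And>t. 0 < t \<Longrightarrow> t \<le> a \<Longrightarrow> t\<^sup>2 < 4 / (n * n - 1) * sech_gap n t"
    using sech_gap_unimodal[OF assms] by blast
  have "\<forall>\<^sub>F eps in at_right 0. eps < m"
    using \<open>0 < m\<close> unfolding eventually_at_right_field by auto
  then show ?thesis
    using eventually_at_right_less[of 0]
  proof eventually_elim
    case (elim eps)
    then obtain t1 t2 where "0 < t1" "t1 < a" "B < t2"
      and roots: "{t. 0 < t \<and> sech_gap n t = eps} = {t1, t2}"
      using level_set_eq_two_points[OF continuous_on_sech_gap sech_gap_0
          sech_gap_tendsto_0_at_top[OF assms] \<open>0 < a\<close> \<open>a < B\<close> shape, of eps]
      by blast
    have "t1 \<in> {t. 0 < t \<and> sech_gap n t = eps}"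
      using roots by simp
    then have "t1\<^sup>2 < 4 / (n * n - 1) * eps"
      using quadratic[of t1] \<open>t1 < a\<close> by simp
    moreover have "t1 < t2"
      using \<open>t1 < a\<close> \<open>a < B\<close> \<open>B < t2\<close> by simp
    ultimately show ?case
      using \<open>0 < t1\<close> roots by blast
  qed
qed

lemma sols_eventually_two_points:
  assumes "1 \<le> L"
  defines "n \<equiv> 2 * real L + 1"
  shows "\<forall>\<^sub>F eps in at_right 0. card (sols L eps) = 2 \<and>
    (\<exists>t. Max (sols L eps) = sech t \<and> 0 < t \<and> t\<^sup>2 \<le> 4 / (n * n - 1) * eps \<and> sech_gap n t = eps)"
proof -
  have "1 < n"
    using assms by simp
  from sech_gap_eventually_two_roots[OF this] show ?thesis
  proof eventually_elim
    case (elim eps)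
    then obtain t1 t2 where "0 < t1" "t1 < t2" "t1\<^sup>2 < 4 / (n * n - 1) * eps"
      and roots: "{t. 0 < t \<and> sech_gap n t = eps} = {t1, t2}"
      by blast
    have "sech t2 < sech t1"
      using sech_strict_decreasing \<open>0 < t1\<close> \<open>t1 < t2\<close> by simp
    moreover have "sols L eps = {sech t1, sech t2}"
      using sols_eq_sech_image[of L eps] roots unfolding n_def by simp
    ultimately have "card (sols L eps) = 2" "Max (sols L eps) = sech t1"
      by (auto simp: max_def)
    with \<open>0 < t1\<close> \<open>t1\<^sup>2 < 4 / (n * n - 1) * eps\<close> roots show ?case
      by auto
  qed
qed

lemma filterlim_at_right_0_if_square_le:
  fixes T :: "real \<Rightarrow> real"
  assumes "\<forall>\<^sub>F eps in at_right 0. 0 < T eps \<and> (T eps)\<^sup>2 \<le> C * eps"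
  shows "filterlim T (at_right 0) (at_right 0)"
proof -
  have "(T \<longlongrightarrow> 0) (at_right 0)"
  proof (rule tendsto_sandwich[of "\<lambda>_. 0" T _ "\<lambda>eps. sqrt (C * eps)"])
    show "\<forall>\<^sub>F eps in at_right 0. 0 \<le> T eps"
      using assms by eventually_elim simp
    show "\<forall>\<^sub>F eps in at_right 0. T eps \<le> sqrt (C * eps)"
      using assms by eventually_elim (simp add: real_le_rsqrt)
    show "((\<lambda>eps. sqrt (C * eps)) \<longlongrightarrow> 0) (at_right 0)"
      by (rule tendsto_eq_intros refl | simp)+
  qed simp
  then show ?thesis
    using assms unfolding filterlim_at by (auto elim: eventually_mono)
qed

lemma fourth_power_bigo_if_square_le:
  fixes T :: "real \<Rightarrow> real"
  assumes "0 < C" "\<forall>\<^sub>F eps in at_right 0. 0 < T eps \<and> (T eps)\<^sup>2 \<le> C * eps"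
  shows "(\<lambda>eps. T eps ^ 4) \<in> O[at_right 0](\<lambda>eps. eps\<^sup>2)"
proof (rule landau_o.bigI)
  show "\<forall>\<^sub>F eps in at_right 0. norm (T eps ^ 4) \<le> C\<^sup>2 * norm (eps\<^sup>2)"
    using assms(2) eventually_at_right_less[of 0]
  proof eventually_elim
    case (elim eps)
    then have "((T eps)\<^sup>2)\<^sup>2 \<le> (C * eps)\<^sup>2"
      by (intro power_mono) auto
    then show ?case
      by (simp add: power_mult[symmetric] power_mult_distrib)
  qed
qed (use \<open>0 < C\<close> in simp)

lemma sech_of_small_root_expansion:
  assumes "1 < n" "0 < C"
    and roots: "\<forall>\<^sub>F eps in at_right 0.
      \<exists>t. x eps = sech t \<and> 0 < t \<and> t\<^sup>2 \<le> C * eps \<and> sech_gap n t = eps"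
  shows "(\<lambda>eps. x eps - (1 - eps / (n * n - 1))) \<in> O[at_right 0](\<lambda>eps. eps\<^sup>2)"
proof -
  define T where "T eps = arcsech (x eps)" for eps
  have ev: "\<forall>\<^sub>F eps in at_right 0.
      x eps = sech (T eps) \<and> 0 < T eps \<and> (T eps)\<^sup>2 \<le> C * eps \<and> sech_gap n (T eps) = eps"
    using roots by eventually_elim (auto simp: T_def arcsech_sech)
  then have T_small: "\<forall>\<^sub>F eps in at_right 0. 0 < T eps \<and> (T eps)\<^sup>2 \<le> C * eps"
    by eventually_elim simp
  have "(\<lambda>eps. (n * n - 1) * (1 - sech (T eps)) - sech_gap n (T eps)) \<in> O[at_right 0](\<lambda>eps. T eps ^ 4)"
    using landau_o.big.compose[OF sech_gap_taylor[OF assms(1)] filterlim_at_right_0_if_square_le[OF T_small]] .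
  also have "(\<lambda>eps. T eps ^ 4) \<in> O[at_right 0](\<lambda>eps. eps\<^sup>2)"
    using \<open>0 < C\<close> T_small by (rule fourth_power_bigo_if_square_le)
  finally have "(\<lambda>eps. (n * n - 1) * (1 - sech (T eps)) - sech_gap n (T eps)) \<in> O[at_right 0](\<lambda>eps. eps\<^sup>2)" .
  moreover have "n * n - 1 \<noteq> 0"
    using less_1_mult[OF assms(1) assms(1)] by simp
  ultimately have "(\<lambda>eps. ((n * n - 1) * (1 - sech (T eps)) - sech_gap n (T eps)) * (-1 / (n * n - 1)))
      \<in> O[at_right 0](\<lambda>eps. eps\<^sup>2)"
    by simp
  moreover have "\<forall>\<^sub>F eps in at_right 0. ((n * n - 1) * (1 - sech (T eps)) - sech_gap n (T eps)) * (-1 / (n * n - 1))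
      = x eps - (1 - eps / (n * n - 1))"
    using ev by eventually_elim (use \<open>n * n - 1 \<noteq> 0\<close> in \<open>simp add: field_simps\<close>)
  ultimately show ?thesis
    by (rule landau_o.big.in_cong[THEN iffD1, rotated])
qed

theorem proposition4:
  fixes L :: nat
  assumes "L \<ge> 1"
  shows "(\<forall>\<^sub>F eps in at_right 0. card (sols L eps) = 2)
    \<and> (\<lambda>eps. Max (sols L eps) - (1 - eps / (4 * (real L ^ 2 + real L))))
        \<in> O[at_right 0](\<lambda>eps. eps ^ 2)"
proof -
  define n where "n = 2 * real L + 1"
  have "1 < n"
    using assms by (simp add: n_def)
  then have "0 < 4 / (n * n - 1)"
    by (simp add: less_1_mult)
  have n_L: "4 * (real L ^ 2 + real L) = n * n - 1"
    by (simp add: n_def algebra_simps power2_eq_square)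
  note two_points = sols_eventually_two_points[OF assms, folded n_def]
  then have "\<forall>\<^sub>F eps in at_right 0.
      \<exists>t. Max (sols L eps) = sech t \<and> 0 < t \<and> t\<^sup>2 \<le> 4 / (n * n - 1) * eps \<and> sech_gap n t = eps"
    by eventually_elim blast
  with \<open>1 < n\<close> \<open>0 < 4 / (n * n - 1)\<close>
  have "(\<lambda>eps. Max (sols L eps) - (1 - eps / (n * n - 1))) \<in> O[at_right 0](\<lambda>eps. eps\<^sup>2)"
    by (rule sech_of_small_root_expansion)
  moreover have "\<forall>\<^sub>F eps in at_right 0. card (sols L eps) = 2"
    using two_points by eventually_elim blast
  ultimately show ?thesis
    unfolding n_L by simp
qed

end
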